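(* Let $X$ be a Hausdorff topological space, $T:X\to X$ continuous, $V\subseteq X$ a nonempty open set and $\delta>0$ such that for every nonempty open set $U\subseteq V$ there is $x_U\in U$ with $\overline{Bd}(N_T(x_U,U))>\delta$. Then there is $j\ge1$ such that $T^j|_V=\mathrm{Id}_V$.
   Context: $N_T(x,U)=\{n\in\mathbb N:T^nx\in U\}$. The upper Banach density of $A\subseteq\mathbb N$ is $\overline{Bd}(A)=\lim_n\sup_k\#(A\cap[k,k+n])/n$. *)

theory Defs
  imports "HOL-Analysis.Analysis"
begin

definition return_times :: "('a \<Rightarrow> 'a) \<Rightarrow> 'a \<Rightarrow> 'a set \<Rightarrow> nat set" where
  "return_times T x U = {n. (T ^^ n) x \<in> U}"

definition upper_banach_density :: "nat set \<Rightarrow> real" where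
  "upper_banach_density A =
     lim (\<lambda>n. SUP k. real (card (A \<inter> {k..k+n})) / real n)"

end

theory Submission
  imports Defs
begin

text \<open>
  Choose K with 1/(K+1) < \<delta>. If on some nonempty open U \<subseteq> V no iterate T^j with
  1 \<le> j \<le> K is the identity on a nonempty open subset, then, separating x from T^j x
  by the Hausdorff property and pulling back by the continuous T^j, U can be shrunk
  step by step to a nonempty open W with T^j W \<inter> W = {} for all 1 \<le> j \<le> K. Return
  times to W are then more than K apart, so their upper Banach density is at most
  1/(K+1), contradicting the hypothesis. Hence every nonempty open subset of V contains
  one on which some T^j, j \<le> K, is the identity. Since all these j divide K!, the open
  set of points of V not fixed by T^K! contains no such subset, so it is empty.
\<close>

lemma subadditive_mult_add:
  fixes f :: "nat \<Rightarrow> real"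
  assumes sub: "\<And>m n. f (m + n) \<le> f m + f n"
  shows "f (q * p + r) \<le> real q * f p + f r"
proof (induction q)
  case (Suc q)
  have "f (Suc q * p + r) \<le> f p + f (q * p + r)"
    using sub[of p "q * p + r"] by (simp add: add.assoc)
  with Suc show ?case by (simp add: algebra_simps)
qed simp

lemma subadditive_div_tendsto_Inf:
  fixes f :: "nat \<Rightarrow> real"
  assumes sub: "\<And>m n. f (m + n) \<le> f m + f n" and nonneg: "\<And>n. 0 \<le> f n"
  shows "(\<lambda>n. f n / real n) \<longlonglongrightarrow> (INF n\<in>{1..}. f n / real n)"
proof (rule LIMSEQ_I)
  define L where "L = (INF n\<in>{1..}. f n / real n)"
  have bdd: "bdd_below ((\<lambda>n. f n / real n) ` {1..})"
    by (rule bdd_belowI2[where m = 0]) (simp add: nonneg)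
  fix \<epsilon> :: real assume "0 < \<epsilon>"
  then obtain p where p: "p \<ge> 1" "f p / real p < L + \<epsilon> / 2"
    using cINF_less_iff[OF _ bdd, of "L + \<epsilon> / 2"] by (auto simp: L_def)
  define B where "B = Max (f ` {..<p})"
  have B: "f r \<le> B" if "r < p" for r
    unfolding B_def using that by (intro Max_ge) auto
  have "0 \<le> B" using B[of 0] nonneg[of 0] p(1) by linarith
  define N where "N = nat \<lceil>2 * B / \<epsilon>\<rceil> + 1"
  have "norm (f m / real m - L) < \<epsilon>" if "N \<le> m" for m
  proof -
    have m: "m \<ge> 1" "2 * B / \<epsilon> < real m" using that unfolding N_def by linarith+
    have "f m \<le> real (m div p) * f p + f (m mod p)"
      using subadditive_mult_add[of f, OF sub, of "m div p" p "m mod p"] by (simp only: div_mult_mod_eq)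
    also have "f (m mod p) \<le> B"
      using p(1) by (intro B) simp
    also have "real (m div p) * f p = (real (m div p) * real p) * (f p / real p)"
      using p(1) by simp
    also have "\<dots> \<le> real m * (f p / real p)"
      by (intro mult_right_mono) (simp_all add: nonneg of_nat_mult[symmetric] del: of_nat_mult)
    finally have "f m / real m \<le> f p / real p + B / real m"
      using m(1) by (simp add: field_simps)
    moreover have "B / real m < \<epsilon> / 2" using m \<open>0 < \<epsilon>\<close> by (simp add: field_simps)
    moreover have "L \<le> f m / real m"
      unfolding L_def using m(1) by (intro cINF_lower[OF bdd]) simp
    ultimately have "\<bar>f m / real m - L\<bar> < \<epsilon>"
      using p(2) by linarith
    then show ?thesis by simp
  qed
  then show "\<exists>N. \<forall>m\<ge>N. norm (f m / real m - L) < \<epsilon>" by blast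
qed

lemma cSUP_divide_const:
  fixes f :: "'a \<Rightarrow> real"
  assumes "A \<noteq> {}" "bdd_above (f ` A)" "0 \<le> c"
  shows "(SUP x\<in>A. f x / c) = (SUP x\<in>A. f x) / c"
proof (cases "c = 0")
  case False
  then have "c > 0" using assms(3) by simp
  show ?thesis
  proof (rule antisym)
    show "(SUP x\<in>A. f x / c) \<le> (SUP x\<in>A. f x) / c"
      using assms(1) \<open>c > 0\<close> by (intro cSUP_least divide_right_mono cSUP_upper assms(2)) auto
    have "(SUP x\<in>A. f x) \<le> (SUP x\<in>A. f x / c) * c"
    proof (rule cSUP_least[OF assms(1)])
      fix x assume "x \<in> A"
      from assms(2) obtain M where "\<forall>x\<in>A. f x \<le> M"
        by (auto simp: bdd_above_def)
      then have "bdd_above ((\<lambda>x. f x / c) ` A)"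
        using \<open>c > 0\<close> by (intro bdd_aboveI2[where M = "M / c"] divide_right_mono) auto
      then have "f x / c \<le> (SUP x\<in>A. f x / c)"
        using \<open>x \<in> A\<close> by (rule cSUP_upper2) simp
      then show "f x \<le> (SUP x\<in>A. f x / c) * c"
        using \<open>c > 0\<close> by (simp add: field_simps)
    qed
    then show "(SUP x\<in>A. f x) / c \<le> (SUP x\<in>A. f x / c)"
      using \<open>c > 0\<close> by (simp add: field_simps)
  qed
qed (use assms(1) in simp)

definition max_window_count :: "nat set \<Rightarrow> nat \<Rightarrow> real" where
  "max_window_count A m = (SUP k. real (card (A \<inter> {k..<k+m})))"

lemma card_window_le: "card (A \<inter> {k..<k+m}) \<le> m"
  using card_mono[of "{k..<k+m}" "A \<inter> {k..<k+m}"] by simp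

lemma bdd_above_window_counts:
  fixes A :: "nat set" and m :: nat
  shows "bdd_above (range (\<lambda>k. real (card (A \<inter> {k..<k+m}))))"
  by (rule bdd_aboveI2[where M = "real m"]) (simp add: card_window_le)

lemma window_count_le_max: "real (card (A \<inter> {k..<k+m})) \<le> max_window_count A m"
  unfolding max_window_count_def by (rule cSUP_upper[OF _ bdd_above_window_counts]) simp

lemma max_window_count_nonneg: "0 \<le> max_window_count A m"
  using window_count_le_max[of A 0 m] by linarith

lemma max_window_count_add:
  "max_window_count A (m + n) \<le> max_window_count A m + max_window_count A n"
  unfolding max_window_count_def[of A "m + n"]
proof (rule cSUP_least)
  fix k
  have "A \<inter> {k..<k+(m+n)} = (A \<inter> {k..<k+m}) \<union> (A \<inter> {k+m..<(k+m)+n})" by auto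
  then have "card (A \<inter> {k..<k+(m+n)}) = card (A \<inter> {k..<k+m}) + card (A \<inter> {k+m..<(k+m)+n})"
    by (simp add: card_Un_disjoint disjoint_iff)
  then show "real (card (A \<inter> {k..<k+(m+n)})) \<le> max_window_count A m + max_window_count A n"
    using window_count_le_max[of A k m] window_count_le_max[of A "k+m" n] by simp
qed simp

lemma upper_banach_density_eq_Inf:
  "upper_banach_density A = (INF p\<in>{1..}. max_window_count A p / real p)"
proof -
  \<comment> \<open>\<open>lim\<close> is an unspecified value unless the limit exists; Fekete's lemma provides it.\<close>
  let ?L = "INF p\<in>{1..}. max_window_count A p / real p"
  have window_eq: "(SUP k. real (card (A \<inter> {k..k+n})) / real n) = max_window_count A (Suc n) / real n"
    for n
  proof -
    have "{k..k+n} = {k..<k + Suc n}" for k by auto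
    then have "(SUP k. real (card (A \<inter> {k..k+n})) / real n)
        = (SUP k. real (card (A \<inter> {k..<k + Suc n})) / real n)"
      by presburger
    also have "\<dots> = max_window_count A (Suc n) / real n"
      unfolding max_window_count_def by (rule cSUP_divide_const) (simp, rule bdd_above_window_counts, simp)
    finally show ?thesis .
  qed
  have "(\<lambda>n. max_window_count A n / real n) \<longlonglongrightarrow> ?L"
    using subadditive_div_tendsto_Inf[of "max_window_count A"]
    by (simp add: max_window_count_add max_window_count_nonneg)
  then have "(\<lambda>n. max_window_count A (Suc n) / real (Suc n) * (real (Suc n) / real n))
      \<longlonglongrightarrow> ?L * 1"
    by (intro tendsto_mult LIMSEQ_Suc LIMSEQ_Suc_n_over_n)
  moreover have "max_window_count A (Suc n) / real (Suc n) * (real (Suc n) / real n)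
      = max_window_count A (Suc n) / real n" if "n \<ge> 1" for n
    using that by (simp del: of_nat_Suc)
  ultimately have "(\<lambda>n. max_window_count A (Suc n) / real n) \<longlonglongrightarrow> ?L"
    by (simp add: Lim_transform_eventually eventually_sequentiallyI)
  then show ?thesis
    unfolding upper_banach_density_def window_eq by (rule limI)
qed

lemma upper_banach_density_le_window:
  "p \<ge> 1 \<Longrightarrow> upper_banach_density A \<le> max_window_count A p / real p"
  unfolding upper_banach_density_eq_Inf
  by (rule cINF_lower[OF bdd_belowI2[where m = 0]]) (simp_all add: max_window_count_nonneg)

lemma upper_banach_density_separated:
  assumes "\<And>a b. a \<in> A \<Longrightarrow> b \<in> A \<Longrightarrow> a < b \<Longrightarrow> K < b - a"
  shows "upper_banach_density A \<le> 1 / real (Suc K)"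
proof -
  have "card (A \<inter> {k..<k + Suc K}) \<le> Suc 0" for k
  proof (subst card_le_Suc0_iff_eq, simp, intro ballI)
    fix a b assume "a \<in> A \<inter> {k..<k + Suc K}" "b \<in> A \<inter> {k..<k + Suc K}"
    then show "a = b"
      using assms[of a b] assms[of b a] by (cases a b rule: linorder_cases) auto
  qed
  then have "max_window_count A (Suc K) \<le> 1"
    unfolding max_window_count_def by (intro cSUP_least) auto
  then have "max_window_count A (Suc K) / real (Suc K) \<le> 1 / real (Suc K)"
    by (intro divide_right_mono) auto
  then show ?thesis
    using upper_banach_density_le_window[of "Suc K" A] by simp
qed

lemma continuous_on_funpow:
  fixes f :: "'a::topological_space \<Rightarrow> 'a"
  assumes "continuous_on UNIV f"
  shows "continuous_on UNIV (f ^^ n)"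
proof (induction n)
  case (Suc n)
  then show ?case
    using continuous_on_compose[OF Suc continuous_on_subset[OF assms]] by simp
qed simp

lemma funpow_fixed_point: "f x = x \<Longrightarrow> (f ^^ n) x = x"
  by (induction n) auto

lemma open_neighbourhood_disjoint_image:
  fixes g :: "'a::t2_space \<Rightarrow> 'a"
  assumes "continuous_on UNIV g" "open W" "x \<in> W" "g x \<noteq> x"
  obtains W' where "open W'" "x \<in> W'" "W' \<subseteq> W" "\<forall>y\<in>W'. g y \<notin> W'"
proof -
  obtain A B where AB: "open A" "open B" "x \<in> A" "g x \<in> B" "A \<inter> B = {}"
    using hausdorff[OF assms(4)[symmetric]] by blast
  have "open (g -` B)"
    using continuous_on_open_vimage[of UNIV g] assms(1) AB(2) by simp
  then show ?thesis
    using AB assms(2,3) by (intro that[of "W \<inter> A \<inter> g -` B"]) auto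
qed

lemma open_subset_without_short_returns:
  fixes T :: "'a::t2_space \<Rightarrow> 'a"
  assumes cont: "continuous_on UNIV T" and "open U" "U \<noteq> {}"
    and nonperiodic: "\<And>j U'. j \<in> {1..K} \<Longrightarrow> open U' \<Longrightarrow> U' \<noteq> {} \<Longrightarrow> U' \<subseteq> U \<Longrightarrow>
      \<exists>x\<in>U'. (T ^^ j) x \<noteq> x"
  obtains W where "open W" "W \<noteq> {}" "W \<subseteq> U" "\<forall>j\<in>{1..K}. \<forall>x\<in>W. (T ^^ j) x \<notin> W"
proof -
  have "\<exists>W. open W \<and> W \<noteq> {} \<and> W \<subseteq> U \<and> (\<forall>j\<in>{1..i}. \<forall>x\<in>W. (T ^^ j) x \<notin> W)"
    if "i \<le> K" for i
    using that
  proof (induction i)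
    case 0
    then show ?case using assms(2,3) by auto
  next
    case (Suc i)
    then obtain W where W: "open W" "W \<noteq> {}" "W \<subseteq> U" "\<forall>j\<in>{1..i}. \<forall>x\<in>W. (T ^^ j) x \<notin> W"
      by auto
    obtain x where x: "x \<in> W" "(T ^^ Suc i) x \<noteq> x"
      using nonperiodic[of "Suc i" W] W Suc.prems by auto
    obtain W' where W': "open W'" "x \<in> W'" "W' \<subseteq> W" "\<forall>y\<in>W'. (T ^^ Suc i) y \<notin> W'"
      using open_neighbourhood_disjoint_image[OF continuous_on_funpow[OF cont] W(1) x] by blast
    have "(T ^^ j) y \<notin> W'" if "j \<in> {1..Suc i}" "y \<in> W'" for j y
    proof (cases "j = Suc i")
      case True
      with W'(4) that(2) show ?thesis by simp
    next
      case False
      with that(1) have "j \<in> {1..i}" by auto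
      with W(4) W'(3) that(2) show ?thesis by blast
    qed
    with W(3) W'(1,2,3) show ?case
      by (intro exI[of _ W']) auto
  qed
  from this[OF order_refl] show ?thesis
    using that by blast
qed

lemma return_times_gap:
  assumes no_return: "\<forall>j\<in>{1..K}. \<forall>y\<in>W. (T ^^ j) y \<notin> W"
    and "a \<in> return_times T x W" "b \<in> return_times T x W" "a < b"
  shows "K < b - a"
proof -
  have "(T ^^ (b - a)) ((T ^^ a) x) = (T ^^ b) x"
    using \<open>a < b\<close> funpow_add[of "b - a" a T] by simp
  then have "(T ^^ (b - a)) ((T ^^ a) x) \<in> W" "(T ^^ a) x \<in> W"
    using assms(2,3) unfolding return_times_def by simp_all
  then have "b - a \<notin> {1..K}"
    using no_return by blast
  then show ?thesis
    using \<open>a < b\<close> by auto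
qed

lemma locally_periodic_if_dense_returns:
  fixes T :: "'a::t2_space \<Rightarrow> 'a"
  assumes cont: "continuous_on UNIV T"
    and dense_returns: "\<And>U. open U \<Longrightarrow> U \<noteq> {} \<Longrightarrow> U \<subseteq> V \<Longrightarrow>
      \<exists>x\<in>U. 1 / real (Suc K) < upper_banach_density (return_times T x U)"
    and U: "open U" "U \<noteq> {}" "U \<subseteq> V"
  shows "\<exists>j\<in>{1..K}. \<exists>U'. open U' \<and> U' \<noteq> {} \<and> U' \<subseteq> U \<and> (\<forall>x\<in>U'. (T ^^ j) x = x)"
proof (rule ccontr)
  assume "\<not> ?thesis"
  then have nonperiodic: "\<exists>x\<in>U'. (T ^^ j) x \<noteq> x"
    if "j \<in> {1..K}" "open U'" "U' \<noteq> {}" "U' \<subseteq> U" for j U'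
    using that by blast
  obtain W where W: "open W" "W \<noteq> {}" "W \<subseteq> U"
    and no_return: "\<forall>j\<in>{1..K}. \<forall>x\<in>W. (T ^^ j) x \<notin> W"
    using open_subset_without_short_returns[OF cont U(1,2) nonperiodic] by blast
  obtain x where x: "1 / real (Suc K) < upper_banach_density (return_times T x W)"
    using dense_returns[OF W(1,2) subset_trans[OF W(3) U(3)]] by blast
  have "upper_banach_density (return_times T x W) \<le> 1 / real (Suc K)"
    using return_times_gap[OF no_return] by (rule upper_banach_density_separated)
  with x show False by simp
qed

lemma funpow_fact_id_on_if_locally_periodic:
  fixes T :: "'a::t2_space \<Rightarrow> 'a"
  assumes cont: "continuous_on UNIV T" and "open V"
    and locally_periodic: "\<And>U. open U \<Longrightarrow> U \<noteq> {} \<Longrightarrow> U \<subseteq> V \<Longrightarrow>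
      \<exists>j\<in>{1..K}. \<exists>U'. open U' \<and> U' \<noteq> {} \<and> U' \<subseteq> U \<and> (\<forall>x\<in>U'. (T ^^ j) x = x)"
  shows "\<forall>x\<in>V. (T ^^ fact K) x = x"
proof (rule ccontr)
  define U where "U = V - {y. (T ^^ fact K) y = y}"
  assume "\<not> ?thesis"
  then have "U \<noteq> {}" unfolding U_def by blast
  moreover have "open U"
    unfolding U_def using \<open>open V\<close> continuous_on_funpow[OF cont]
    by (intro open_Diff closed_Collect_eq) auto
  moreover have "U \<subseteq> V"
    unfolding U_def by blast
  ultimately obtain j U' where j: "j \<in> {1..K}" and "U' \<noteq> {}" "U' \<subseteq> U"
    and periodic: "\<forall>x\<in>U'. (T ^^ j) x = x"
    using locally_periodic[of U] by blast
  then obtain y where "y \<in> U'" by blast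
  obtain q where "fact K = j * q"
    using j dvd_fact[of j K] by auto
  then have "(T ^^ fact K) y = y"
    using periodic \<open>y \<in> U'\<close> by (simp add: funpow_mult[symmetric] funpow_fixed_point)
  with \<open>U' \<subseteq> U\<close> \<open>y \<in> U'\<close> show False unfolding U_def by blast
qed

theorem mainTheorem13:
  fixes T :: "'a::t2_space \<Rightarrow> 'a" and V :: "'a set" and \<delta> :: real
  assumes "continuous_on UNIV T"
    and "open V" and "V \<noteq> {}"
    and "\<delta> > 0"
    and "\<And>U. open U \<Longrightarrow> U \<noteq> {} \<Longrightarrow> U \<subseteq> V \<Longrightarrow>
           \<exists>x\<in>U. upper_banach_density (return_times T x U) > \<delta>"
  shows "\<exists>j\<ge>1. \<forall>x\<in>V. (T ^^ j) x = x"
proof -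
  obtain K where K: "1 / real (Suc K) < \<delta>"
    using reals_Archimedean[OF \<open>\<delta> > 0\<close>] by (auto simp: inverse_eq_divide)
  have dense_returns: "\<exists>x\<in>U. 1 / real (Suc K) < upper_banach_density (return_times T x U)"
    if "open U" "U \<noteq> {}" "U \<subseteq> V" for U
    using assms(5)[OF that] K by (meson less_trans)
  have "\<forall>x\<in>V. (T ^^ fact K) x = x"
    by (rule funpow_fact_id_on_if_locally_periodic[OF assms(1,2)
          locally_periodic_if_dense_returns[OF assms(1) dense_returns]])
  then show ?thesis
    using fact_ge_1[of K] by blast
qed

end
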